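(* Let $L_w = BWB^\top\in\mathbb{R}^{n\times n}$ be the weighted Laplacian of a connected undirected graph with nonnegative edge weights (so that its second smallest eigenvalue is positive), and let $E\in\mathbb{R}^{n\times k}$ be a port matrix. Consider the system $\dot x = -L_w x + E d$, $y=E^\top x$, with transfer matrix $\mathbb{G}(s)=E^\top(sI+L_w)^{-1}E$. Let $\gamma>0$. If $\|\mathbb{G}\|_\infty\le\gamma$, then $P=\gamma I_n$ satisfies the Riccati inequality $$-PL_w - L_w^\top P + EE^\top + \frac{1}{\gamma^2}PEE^\top P \preceq 0 .$$
   Context: A weighted undirected graph has node set $\{v_1,\dots,v_n\}$, edge set $\{\mathcal{E}_1,\dots,\mathcal{E}_m\}$ and edge weights $w_1,\dots,w_m$. Given an arbitrary orientation of each edge, the incidence matrix $B\in\mathbb{R}^{n\times m}$ has $B_{ij}=1$ if edge $\mathcal{E}_j$ starts at $v_i$, $B_{ij}=-1$ if it ends at $v_i$, and $0$ otherwise; $W=\mathrm{diag}(w_1,\dots,w_m)$ and the weighted Laplacian is $L_w=BWB^\top$. A port matrix $E\in\mathbb{R}^{n\times k}$ is a matrix each of whose columns has exactly one entry equal to $1$, exactly one entry equal to $-1$, and all other entries $0$. The $\mathcal{H}_\infty$-norm $\|\mathbb{G}\|_\infty$ is the induced $\mathcal{L}_2$-gain from $d$ to $y$ with $x(0)=0$, which equals $\sup_{\omega\in\mathbb{R}}\bar\sigma(\mathbb{G}(j\omega))$ with $\bar\sigma$ the largest singular value. $M\preceq 0$ means $-M$ is symmetric positive semidefinite. *)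

theory Defs
  imports "HOL-Analysis.Analysis"
begin

text \<open>Graph: nodes of finite type 'n, edges of finite type 'm; each edge j is oriented
  from fst (ends j) to snd (ends j). Weights w j.\<close>

definition incidence_matrix :: "('m \<Rightarrow> 'n \<times> 'n) \<Rightarrow> real^'m^'n" where
  "incidence_matrix ends = (\<chi> i j. if i = fst (ends j) then 1
                                    else if i = snd (ends j) then -1 else 0)"

definition diag_mat :: "('m \<Rightarrow> real) \<Rightarrow> real^'m^'m" where
  "diag_mat w = (\<chi> i j. if i = j then w i else 0)"

definition weighted_laplacian :: "('m::finite \<Rightarrow> 'n::finite \<times> 'n) \<Rightarrow> ('m \<Rightarrow> real) \<Rightarrow> real^'n^'n" where
  "weighted_laplacian ends w =
     incidence_matrix ends ** diag_mat w ** transpose (incidence_matrix ends)"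

definition graph_connected :: "('m \<Rightarrow> 'n \<times> 'n) \<Rightarrow> ('m \<Rightarrow> real) \<Rightarrow> bool" where
  "graph_connected ends w \<longleftrightarrow>
     (\<forall>u v. (u, v) \<in> ({(a, b). \<exists>j. w j > 0 \<and> (ends j = (a, b) \<or> ends j = (b, a))})\<^sup>*)"

definition port_matrix :: "real^'k^'n \<Rightarrow> bool" where
  "port_matrix E \<longleftrightarrow>
     (\<forall>j. \<exists>a b. a \<noteq> b \<and> (\<forall>i. E $ i $ j = (if i = a then 1 else if i = b then -1 else 0)))"

definition cmat :: "real^'b^'a \<Rightarrow> complex^'b^'a" where
  "cmat M = (\<chi> i j. complex_of_real (M $ i $ j))"

definition transfer_matrix :: "real^'n::finite^'n \<Rightarrow> real^'k^'n \<Rightarrow> complex \<Rightarrow> complex^'k^'k" where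
  "transfer_matrix L E s =
     transpose (cmat E) ** matrix_inv ((\<chi> i j. if i = j then s else 0) + cmat L) ** cmat E"

text \<open>Largest singular value = operator norm induced by the Euclidean norm on complex^'k.\<close>
definition max_sv :: "complex^'k^'l \<Rightarrow> real" where
  "max_sv M = onorm (\<lambda>v. M *v v)"

text \<open>H-infinity norm: sup over frequencies of the largest singular value of G(j\<omega>).
  The point \<omega> = 0 (where s I + L is singular) is omitted; G extends continuously there.\<close>
definition hinf_norm :: "real^'n^'n \<Rightarrow> real^'k^'n \<Rightarrow> ereal" where
  "hinf_norm L E = (SUP \<omega>\<in>{\<omega>::real. \<omega> \<noteq> 0}. ereal (max_sv (transfer_matrix L E (\<i> * complex_of_real \<omega>))))"

definition neg_semidef :: "real^'n^'n \<Rightarrow> bool" where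
  "neg_semidef M \<longleftrightarrow> transpose M = M \<and> (\<forall>x. x \<bullet> (M *v x) \<le> 0)"

end

theory Submission imports Defs begin

text \<open>
  Since \<open>L\<^sub>w = B W B\<^sup>T\<close> is symmetric, the Riccati matrix for \<open>P = \<gamma> I\<close> equals
  \<open>2 (E E\<^sup>T - \<gamma> L\<^sub>w)\<close>, so the claim is \<open>\<parallel>E\<^sup>T x\<parallel>\<^sup>2 \<le> \<gamma> x\<^sup>T L\<^sub>w x\<close> for all real \<open>x\<close>.
  Put \<open>v = E\<^sup>T x\<close> and solve \<open>(j\<omega> I + L\<^sub>w) (p + j q) = E v\<close> for \<open>\<omega> > 0\<close>.
  Testing this equation against \<open>p + j q\<close> expresses the dissipated energy
  \<open>p\<^sup>T L\<^sub>w p + q\<^sup>T L\<^sub>w q\<close> and the reactive term \<open>\<omega> (\<parallel>p\<parallel>\<^sup>2 + \<parallel>q\<parallel>\<^sup>2)\<close> as the real and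
  imaginary parts of \<open>v\<^sup>* E\<^sup>T (p + j q)\<close>, which the gain bound controls by \<open>\<gamma> \<parallel>v\<parallel>\<^sup>2\<close>.
  Then \<open>\<parallel>v\<parallel>\<^sup>2 = x\<^sup>T L\<^sub>w p - \<omega> x\<^sup>T q\<close>, and the Cauchy--Schwarz inequality for the form
  \<open>L\<^sub>w\<close> gives \<open>\<parallel>v\<parallel> \<le> \<surd>(\<gamma> x\<^sup>T L\<^sub>w x) + \<surd>(\<gamma> \<omega>) \<parallel>x\<parallel>\<close>; let \<open>\<omega> \<rightarrow> 0\<close>.
\<close>

lemma inner_mult_transpose: "(a :: real^'n) \<bullet> (M *v b) = (transpose M *v a) \<bullet> b"
  by (simp add: dot_lmul_matrix[symmetric])

lemma inner_mult_symmetric: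
  fixes L :: "real^'n^'n"
  assumes "transpose L = L"
  shows "x \<bullet> (L *v y) = y \<bullet> (L *v x)"
  by (metis assms dot_lmul_matrix inner_commute transpose_matrix_vector)

lemma transpose_add: "transpose (A + B) = transpose A + transpose B"
  by (simp add: transpose_def vec_eq_iff)

lemma transpose_diff: "transpose (A - B) = transpose A - transpose B"
  by (simp add: transpose_def vec_eq_iff)

lemma scaleR_mat_1_mult: "(c *\<^sub>R mat 1) ** A = c *\<^sub>R (A :: real^'m^'n)"
  by (metis matrix_mul_lid scalar_matrix_assoc)

lemma mult_scaleR_mat_1: "A ** (c *\<^sub>R mat 1) = c *\<^sub>R (A :: real^'m^'n)"
  by (metis matrix_mul_rid matrix_scalar_ac scalar_matrix_assoc)

lemma transpose_diag_mat [simp]: "transpose (diag_mat a) = diag_mat a"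
  by (simp add: transpose_def diag_mat_def vec_eq_iff)

lemma diag_mat_mult: "diag_mat a ** diag_mat b = diag_mat (\<lambda>j. a j * b j)"
proof -
  have "(\<Sum>k\<in>UNIV. (if i = k then a i else 0) * (if k = j then b k else 0))
          = (\<Sum>k\<in>UNIV. if k = i then (if i = j then a i * b i else 0) else 0)" for i j :: 'a
    by (rule sum.cong) auto
  then show ?thesis
    by (simp add: diag_mat_def matrix_matrix_mult_def vec_eq_iff)
qed

lemma scalar_diagonal_mult: "(\<chi> i j. if i = j then s else 0) *v u = s *s u"
  by (simp add: matrix_vector_mult_def vec_eq_iff if_distrib if_distribR cong: if_cong)

lemma matrix_mul_matrix_inv: "invertible A \<Longrightarrow> A ** matrix_inv A = mat 1"
  unfolding invertible_def matrix_inv_def by (rule someI2_ex) auto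

definition Re_vec :: "complex^'n \<Rightarrow> real^'n" where
  "Re_vec u = (\<chi> i. Re (u $ i))"

definition Im_vec :: "complex^'n \<Rightarrow> real^'n" where
  "Im_vec u = (\<chi> i. Im (u $ i))"

definition of_real_vec :: "real^'n \<Rightarrow> complex^'n" where
  "of_real_vec v = (\<chi> i. complex_of_real (v $ i))"

abbreviation shifted_cmat :: "complex \<Rightarrow> real^'n^'n \<Rightarrow> complex^'n^'n" where
  "shifted_cmat s L \<equiv> (\<chi> i j. if i = j then s else 0) + cmat L"

lemma Re_vec_cmat_mult: "Re_vec (cmat M *v u) = M *v Re_vec u"
  by (simp add: Re_vec_def cmat_def matrix_vector_mult_def vec_eq_iff Re_sum)

lemma Im_vec_cmat_mult: "Im_vec (cmat M *v u) = M *v Im_vec u"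
  by (simp add: Im_vec_def cmat_def matrix_vector_mult_def vec_eq_iff Im_sum)

lemma cmat_mult_of_real_vec: "cmat M *v of_real_vec v = of_real_vec (M *v v)"
  by (simp add: of_real_vec_def cmat_def matrix_vector_mult_def vec_eq_iff)

lemma Re_vec_of_real_vec [simp]: "Re_vec (of_real_vec v) = v"
  by (simp add: Re_vec_def of_real_vec_def vec_eq_iff)

lemma Im_vec_of_real_vec [simp]: "Im_vec (of_real_vec v) = 0"
  by (simp add: Im_vec_def of_real_vec_def vec_eq_iff)

lemma transpose_cmat: "transpose (cmat M) = cmat (transpose M)"
  by (simp add: transpose_def cmat_def vec_eq_iff)

lemma Re_vec_0 [simp]: "Re_vec 0 = 0"
  by (simp add: Re_vec_def vec_eq_iff)

lemma Im_vec_0 [simp]: "Im_vec 0 = 0"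
  by (simp add: Im_vec_def vec_eq_iff)

lemma complex_vec_eq_0_iff: "u = 0 \<longleftrightarrow> Re_vec u = 0 \<and> Im_vec u = 0"
  by (auto simp: Re_vec_def Im_vec_def vec_eq_iff complex_eq_iff)

lemma norm_complex_vec_squared: "norm u ^ 2 = norm (Re_vec u) ^ 2 + norm (Im_vec u) ^ 2"
  by (simp add: power2_norm_eq_inner inner_vec_def inner_complex_def Re_vec_def Im_vec_def
      sum.distrib)

lemma norm_of_real_vec: "norm (of_real_vec v) = norm v"
  using norm_complex_vec_squared[of "of_real_vec v"] by (simp add: power2_eq_iff_nonneg)

lemma Re_vec_shifted_cmat_mult:
  "Re_vec (shifted_cmat (\<i> * complex_of_real \<omega>) L *v u) = L *v Re_vec u - \<omega> *\<^sub>R Im_vec u"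
  by (simp add: matrix_vector_mult_add_rdistrib scalar_diagonal_mult Re_vec_cmat_mult[symmetric])
     (simp add: Re_vec_def Im_vec_def vec_eq_iff)

lemma Im_vec_shifted_cmat_mult:
  "Im_vec (shifted_cmat (\<i> * complex_of_real \<omega>) L *v u) = L *v Im_vec u + \<omega> *\<^sub>R Re_vec u"
  by (simp add: matrix_vector_mult_add_rdistrib scalar_diagonal_mult Im_vec_cmat_mult[symmetric])
     (simp add: Re_vec_def Im_vec_def vec_eq_iff)

lemma invertible_shifted_cmat:
  fixes L :: "real^'n::finite^'n"
  assumes sym: "transpose L = L" and "\<omega> \<noteq> 0"
  shows "invertible (shifted_cmat (\<i> * complex_of_real \<omega>) L)"
proof -
  have "u = 0" if "shifted_cmat (\<i> * complex_of_real \<omega>) L *v u = 0" for u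
  proof -
    have Re: "L *v Re_vec u = \<omega> *\<^sub>R Im_vec u" and Im: "L *v Im_vec u = - \<omega> *\<^sub>R Re_vec u"
      using that Re_vec_shifted_cmat_mult[of \<omega> L u] Im_vec_shifted_cmat_mult[of \<omega> L u]
      by (simp_all add: eq_commute[of 0] eq_neg_iff_add_eq_0)
    have "\<omega> * (Im_vec u \<bullet> Im_vec u) = - \<omega> * (Re_vec u \<bullet> Re_vec u)"
      using inner_mult_symmetric[OF sym, of "Im_vec u" "Re_vec u"] by (simp add: Re Im)
    then have "\<omega> * (Im_vec u \<bullet> Im_vec u + Re_vec u \<bullet> Re_vec u) = 0"
      by (simp add: distrib_left)
    then have "Im_vec u \<bullet> Im_vec u + Re_vec u \<bullet> Re_vec u = 0"
      using \<open>\<omega> \<noteq> 0\<close> by simp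
    then show "u = 0"
      by (metis add_nonneg_eq_0_iff complex_vec_eq_0_iff inner_eq_zero_iff inner_ge_zero)
  qed
  then show ?thesis
    unfolding invertible_left_inverse matrix_left_invertible_ker by blast
qed

lemma transfer_matrix_real_solution:
  fixes L :: "real^'n::finite^'n" and E :: "real^'k::finite^'n"
  assumes sym: "transpose L = L" and "\<omega> \<noteq> 0"
  obtains p q where "L *v p - \<omega> *\<^sub>R q = E *v v" and "L *v q + \<omega> *\<^sub>R p = 0"
    and "norm (transpose E *v p) ^ 2 + norm (transpose E *v q) ^ 2
           \<le> (max_sv (transfer_matrix L E (\<i> * complex_of_real \<omega>)) * norm v) ^ 2"
proof -
  define A where "A = shifted_cmat (\<i> * complex_of_real \<omega>) L"
  define u where "u = matrix_inv A *v (cmat E *v of_real_vec v)"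
  have "A *v u = of_real_vec (E *v v)"
    using matrix_mul_matrix_inv[OF invertible_shifted_cmat[OF assms]]
    by (simp add: u_def A_def matrix_vector_mul_assoc cmat_mult_of_real_vec)
  then have Re: "L *v Re_vec u - \<omega> *\<^sub>R Im_vec u = E *v v"
    and Im: "L *v Im_vec u + \<omega> *\<^sub>R Re_vec u = 0"
    using Re_vec_shifted_cmat_mult[of \<omega> L u] Im_vec_shifted_cmat_mult[of \<omega> L u]
    by (simp_all add: A_def)
  let ?G = "transfer_matrix L E (\<i> * complex_of_real \<omega>)"
  have G: "?G *v of_real_vec v = transpose (cmat E) *v u"
    by (simp add: transfer_matrix_def u_def A_def matrix_vector_mul_assoc matrix_mul_assoc)
  have "norm (?G *v of_real_vec v) \<le> max_sv ?G * norm (of_real_vec v)"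
    unfolding max_sv_def by (rule onorm) simp
  then have "norm (transpose (cmat E) *v u) ^ 2 \<le> (max_sv ?G * norm v) ^ 2"
    by (simp add: G norm_of_real_vec power_mono)
  then have "norm (transpose E *v Re_vec u) ^ 2 + norm (transpose E *v Im_vec u) ^ 2
               \<le> (max_sv ?G * norm v) ^ 2"
    by (simp add: norm_complex_vec_squared transpose_cmat Re_vec_cmat_mult Im_vec_cmat_mult)
  with Re Im that show ?thesis by blast
qed

lemma resolvent_energy_le:
  fixes L :: "real^'n::finite^'n" and T :: "real^'n^'m::finite" and E :: "real^'k::finite^'n"
  assumes L: "L = transpose T ** T" and "\<omega> > 0" and "\<gamma> \<ge> 0"
    and Re: "L *v p - \<omega> *\<^sub>R q = E *v v" and Im: "L *v q + \<omega> *\<^sub>R p = 0"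
    and gain: "norm (transpose E *v p) ^ 2 + norm (transpose E *v q) ^ 2 \<le> (\<gamma> * norm v) ^ 2"
  shows "norm (T *v p) ^ 2 + norm (T *v q) ^ 2 \<le> \<gamma> * norm v ^ 2"
    and "\<omega> * (norm p ^ 2 + norm q ^ 2) \<le> \<gamma> * norm v ^ 2"
proof -
  define z where "z = E *v v"
  have form: "a \<bullet> (L *v b) = (T *v a) \<bullet> (T *v b)" for a b
    by (simp only: L matrix_vector_mul_assoc[symmetric] inner_mult_transpose transpose_transpose)
  have Lp: "L *v p = z + \<omega> *\<^sub>R q" and Lq: "L *v q = - \<omega> *\<^sub>R p"
    using Re Im by (simp_all add: z_def algebra_simps eq_neg_iff_add_eq_0)
  define a where "a = norm (T *v p) ^ 2 + norm (T *v q) ^ 2"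
  define b where "b = \<omega> * (norm p ^ 2 + norm q ^ 2)"
  have a: "a = v \<bullet> (transpose E *v p)"
  proof -
    have "a = p \<bullet> (L *v p) + q \<bullet> (L *v q)"
      by (simp add: a_def form power2_norm_eq_inner)
    also have "\<dots> = z \<bullet> p"
      by (simp add: Lp Lq inner_add_right inner_commute)
    finally show ?thesis
      by (simp add: z_def inner_mult_transpose inner_commute)
  qed
  have b: "b = - (v \<bullet> (transpose E *v q))"
  proof -
    have "q \<bullet> (L *v p) = p \<bullet> (L *v q)"
      by (simp add: form inner_commute)
    then have "z \<bullet> q + \<omega> * (q \<bullet> q) = - \<omega> * (p \<bullet> p)"
      by (simp add: Lp Lq inner_add_right inner_commute)
    then have "b = - (z \<bullet> q)"
      by (simp add: b_def power2_norm_eq_inner algebra_simps)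
    then show ?thesis
      by (simp add: z_def inner_mult_transpose inner_commute)
  qed
  have "a ^ 2 + b ^ 2 \<le> norm v ^ 2 * (norm (transpose E *v p) ^ 2 + norm (transpose E *v q) ^ 2)"
    unfolding a b using Cauchy_Schwarz_ineq[of v "transpose E *v p"]
      Cauchy_Schwarz_ineq[of v "transpose E *v q"]
    by (simp add: power2_norm_eq_inner distrib_left)
  also have "\<dots> \<le> (\<gamma> * norm v ^ 2) ^ 2"
    using mult_left_mono[OF gain, of "norm v ^ 2"] by (simp add: power2_eq_square mult_ac)
  finally have "a ^ 2 + b ^ 2 \<le> (\<gamma> * norm v ^ 2) ^ 2" .
  moreover have "\<gamma> * norm v ^ 2 \<ge> 0"
    using \<open>\<gamma> \<ge> 0\<close> by simp
  ultimately have "a \<le> \<gamma> * norm v ^ 2" and "b \<le> \<gamma> * norm v ^ 2"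
    by (smt (verit) power2_le_imp_le zero_le_power2)+
  then show "norm (T *v p) ^ 2 + norm (T *v q) ^ 2 \<le> \<gamma> * norm v ^ 2"
    and "\<omega> * (norm p ^ 2 + norm q ^ 2) \<le> \<gamma> * norm v ^ 2"
    by (simp_all add: a_def b_def)
qed

lemma norm_output_le_resolvent:
  fixes L :: "real^'n::finite^'n" and T :: "real^'n^'m::finite" and E :: "real^'k::finite^'n"
  assumes L: "L = transpose T ** T" and "\<omega> > 0" and "\<gamma> \<ge> 0"
    and Re: "L *v p - \<omega> *\<^sub>R q = E *v (transpose E *v x)" and Im: "L *v q + \<omega> *\<^sub>R p = 0"
    and gain: "norm (transpose E *v p) ^ 2 + norm (transpose E *v q) ^ 2
                 \<le> (\<gamma> * norm (transpose E *v x)) ^ 2"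
  shows "norm (transpose E *v x) \<le> sqrt \<gamma> * norm (T *v x) + sqrt \<gamma> * norm x * sqrt \<omega>"
proof -
  define V where "V = norm (transpose E *v x)"
  note energy = resolvent_energy_le[OF L \<open>\<omega> > 0\<close> \<open>\<gamma> \<ge> 0\<close> Re Im gain, folded V_def]
  have "V \<ge> 0"
    by (simp add: V_def)
  have "norm (T *v p) ^ 2 \<le> \<gamma> * V ^ 2"
    using energy(1) zero_le_power2[of "norm (T *v q)"] by linarith
  then have Tp: "norm (T *v p) \<le> sqrt \<gamma> * V"
    using real_le_rsqrt \<open>V \<ge> 0\<close> by (fastforce simp: real_sqrt_mult)
  have "0 \<le> \<omega> * norm p ^ 2"
    using \<open>\<omega> > 0\<close> by simp
  then have "\<omega> * norm q ^ 2 \<le> \<gamma> * V ^ 2"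
    using energy(2) unfolding distrib_left by linarith
  have "(\<omega> * norm q) ^ 2 = \<omega> * (\<omega> * norm q ^ 2)"
    by (simp add: power2_eq_square)
  also have "\<dots> \<le> \<omega> * (\<gamma> * V ^ 2)"
    using \<open>\<omega> * norm q ^ 2 \<le> \<gamma> * V ^ 2\<close> \<open>\<omega> > 0\<close> by simp
  also have "\<dots> = (sqrt \<gamma> * sqrt \<omega> * V) ^ 2"
    using \<open>\<omega> > 0\<close> \<open>\<gamma> \<ge> 0\<close> by (simp add: power_mult_distrib)
  finally have wq: "\<omega> * norm q \<le> sqrt \<gamma> * sqrt \<omega> * V"
    by (rule power2_le_imp_le) (use \<open>V \<ge> 0\<close> \<open>\<omega> > 0\<close> \<open>\<gamma> \<ge> 0\<close> in simp)
  have "V ^ 2 = x \<bullet> (E *v (transpose E *v x))"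
    by (simp only: V_def power2_norm_eq_inner inner_mult_transpose)
  also have "\<dots> = x \<bullet> (L *v p) - \<omega> * (x \<bullet> q)"
    by (simp only: Re[symmetric] inner_diff_right inner_scaleR_right)
  also have "\<dots> = (T *v x) \<bullet> (T *v p) - \<omega> * (x \<bullet> q)"
    by (simp only: L matrix_vector_mul_assoc[symmetric] inner_mult_transpose transpose_transpose)
  also have "\<dots> \<le> norm (T *v x) * norm (T *v p) + norm x * (\<omega> * norm q)"
  proof -
    have "- (x \<bullet> q) \<le> norm x * norm q"
      using Cauchy_Schwarz_ineq2[of x q] by linarith
    then have "\<omega> * - (x \<bullet> q) \<le> norm x * (\<omega> * norm q)"
      using mult_left_mono[of "- (x \<bullet> q)" "norm x * norm q" \<omega>] \<open>\<omega> > 0\<close> by (simp add: mult_ac)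
    then show ?thesis
      using norm_cauchy_schwarz[of "T *v x" "T *v p"] by linarith
  qed
  also have "\<dots> \<le> norm (T *v x) * (sqrt \<gamma> * V) + norm x * (sqrt \<gamma> * sqrt \<omega> * V)"
    using Tp wq by (intro add_mono mult_left_mono) simp_all
  also have "\<dots> = (sqrt \<gamma> * norm (T *v x) + sqrt \<gamma> * norm x * sqrt \<omega>) * V"
    by (simp add: algebra_simps)
  finally have "V * V \<le> (sqrt \<gamma> * norm (T *v x) + sqrt \<gamma> * norm x * sqrt \<omega>) * V"
    by (simp add: power2_eq_square)
  then show ?thesis
    using \<open>V \<ge> 0\<close> \<open>\<gamma> \<ge> 0\<close> \<open>\<omega> > 0\<close> unfolding V_def[symmetric]
    by (cases "V = 0") (simp_all add: mult_le_cancel_right)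
qed

lemma le_of_le_add_sqrt:
  fixes t c d :: real
  assumes "d \<ge> 0" and le: "\<And>\<omega>. \<omega> > 0 \<Longrightarrow> t \<le> c + d * sqrt \<omega>"
  shows "t \<le> c"
proof (rule field_le_epsilon)
  fix e :: real
  assume "e > 0"
  define \<omega> where "\<omega> = (e / (d + 1)) ^ 2"
  have "d * sqrt \<omega> = d / (d + 1) * e"
    using \<open>e > 0\<close> \<open>d \<ge> 0\<close> by (simp add: \<omega>_def)
  also have "\<dots> \<le> e"
    using \<open>e > 0\<close> \<open>d \<ge> 0\<close> by (simp add: pos_divide_le_eq distrib_left)
  finally show "t \<le> c + e"
    using le[of \<omega>] \<open>e > 0\<close> \<open>d \<ge> 0\<close> by (simp add: \<omega>_def)
qed

lemma norm_output_squared_le_of_max_sv_le: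
  fixes L :: "real^'n::finite^'n" and T :: "real^'n^'m::finite" and E :: "real^'k::finite^'n"
  assumes L: "L = transpose T ** T" and "\<gamma> \<ge> 0"
    and gain: "\<And>\<omega>. \<omega> > 0 \<Longrightarrow> max_sv (transfer_matrix L E (\<i> * complex_of_real \<omega>)) \<le> \<gamma>"
  shows "norm (transpose E *v x) ^ 2 \<le> \<gamma> * (x \<bullet> (L *v x))"
proof -
  have sym: "transpose L = L"
    by (simp add: L matrix_transpose_mul)
  have approx: "norm (transpose E *v x) \<le> sqrt \<gamma> * norm (T *v x) + sqrt \<gamma> * norm x * sqrt \<omega>"
    if "\<omega> > 0" for \<omega>
  proof -
    let ?G = "transfer_matrix L E (\<i> * complex_of_real \<omega>)"
    have "\<omega> \<noteq> 0"
      using that by simp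
    obtain p q where Re: "L *v p - \<omega> *\<^sub>R q = E *v (transpose E *v x)"
      and Im: "L *v q + \<omega> *\<^sub>R p = 0"
      and G: "norm (transpose E *v p) ^ 2 + norm (transpose E *v q) ^ 2
                \<le> (max_sv ?G * norm (transpose E *v x)) ^ 2"
      by (rule transfer_matrix_real_solution[OF sym \<open>\<omega> \<noteq> 0\<close>])
    have "0 \<le> max_sv ?G"
      unfolding max_sv_def by (rule onorm_pos_le) simp
    then have "(max_sv ?G * norm (transpose E *v x)) ^ 2 \<le> (\<gamma> * norm (transpose E *v x)) ^ 2"
      using gain[OF that] by (intro power_mono mult_right_mono) simp_all
    with G have "norm (transpose E *v p) ^ 2 + norm (transpose E *v q) ^ 2
                   \<le> (\<gamma> * norm (transpose E *v x)) ^ 2"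
      by (rule order_trans)
    then show ?thesis
      by (rule norm_output_le_resolvent[OF L that \<open>\<gamma> \<ge> 0\<close> Re Im])
  qed
  have "norm (transpose E *v x) \<le> sqrt \<gamma> * norm (T *v x)"
    by (rule le_of_le_add_sqrt[of "sqrt \<gamma> * norm x"]) (use \<open>\<gamma> \<ge> 0\<close> approx in auto)
  then have "norm (transpose E *v x) ^ 2 \<le> (sqrt \<gamma> * norm (T *v x)) ^ 2"
    by (rule power_mono) simp
  also have "\<dots> = \<gamma> * norm (T *v x) ^ 2"
    using \<open>\<gamma> \<ge> 0\<close> by (simp add: power_mult_distrib)
  also have "norm (T *v x) ^ 2 = x \<bullet> (L *v x)"
    by (simp only: L matrix_vector_mul_assoc[symmetric] inner_mult_transpose transpose_transpose
        power2_norm_eq_inner)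
  finally show ?thesis .
qed

lemma max_sv_le_hinf_norm:
  "\<omega> \<noteq> 0 \<Longrightarrow> ereal (max_sv (transfer_matrix L E (\<i> * complex_of_real \<omega>))) \<le> hinf_norm L E"
  unfolding hinf_norm_def by (rule SUP_upper) simp

lemma weighted_laplacian_eq_gram:
  fixes ends :: "'m::finite \<Rightarrow> 'n::finite \<times> 'n"
  assumes "\<And>j. w j \<ge> 0"
  defines "M \<equiv> diag_mat (\<lambda>j. sqrt (w j)) ** transpose (incidence_matrix ends)"
  shows "weighted_laplacian ends w = transpose M ** M"
proof -
  have "transpose M ** M = incidence_matrix ends ** (diag_mat (\<lambda>j. sqrt (w j))
          ** diag_mat (\<lambda>j. sqrt (w j))) ** transpose (incidence_matrix ends)"
    by (simp add: M_def matrix_transpose_mul matrix_mul_assoc)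
  also have "\<dots> = weighted_laplacian ends w"
    using assms(1) by (simp add: diag_mat_mult weighted_laplacian_def)
  finally show ?thesis ..
qed

lemma neg_semidef_add: "neg_semidef A \<Longrightarrow> neg_semidef B \<Longrightarrow> neg_semidef (A + B)"
  by (simp add: neg_semidef_def transpose_add matrix_vector_mult_add_rdistrib inner_add_right
      add_nonpos_nonpos)

lemma neg_semidef_outer_diff:
  fixes L :: "real^'n::finite^'n" and E :: "real^'k::finite^'n"
  assumes sym: "transpose L = L"
    and le: "\<And>x. norm (transpose E *v x) ^ 2 \<le> \<gamma> * (x \<bullet> (L *v x))"
  shows "neg_semidef (E ** transpose E - \<gamma> *\<^sub>R L)"
proof -
  have "x \<bullet> ((E ** transpose E - \<gamma> *\<^sub>R L) *v x) = norm (transpose E *v x) ^ 2 - \<gamma> * (x \<bullet> (L *v x))"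
    for x
    by (simp only: matrix_vector_mult_diff_rdistrib scaleR_matrix_vector_assoc[symmetric]
        matrix_vector_mul_assoc[symmetric] inner_diff_right inner_scaleR_right
        inner_mult_transpose[of x E] power2_norm_eq_inner)
  then show ?thesis
    using le by (simp add: neg_semidef_def transpose_diff transpose_scalar sym matrix_transpose_mul)
qed

lemma riccati_scalar_eq:
  fixes L :: "real^'n::finite^'n" and E :: "real^'k::finite^'n"
  assumes "transpose L = L" and "\<gamma> \<noteq> 0"
  shows "- ((\<gamma> *\<^sub>R mat 1) ** L) - transpose L ** (\<gamma> *\<^sub>R mat 1) + E ** transpose E
           + (1 / \<gamma>\<^sup>2) *\<^sub>R ((\<gamma> *\<^sub>R mat 1) ** E ** transpose E ** (\<gamma> *\<^sub>R mat 1))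
         = (E ** transpose E - \<gamma> *\<^sub>R L) + (E ** transpose E - \<gamma> *\<^sub>R L)"
  using assms
  by (simp add: scaleR_mat_1_mult mult_scaleR_mat_1 scalar_matrix_assoc[symmetric] power2_eq_square)

theorem theorem2:
  fixes ends :: "'m::finite \<Rightarrow> 'n::finite \<times> 'n"
    and w :: "'m \<Rightarrow> real"
    and E :: "real^'k::finite^'n"
    and \<gamma> :: real
  assumes no_loops: "\<And>j. fst (ends j) \<noteq> snd (ends j)"
    and w_nonneg: "\<And>j. w j \<ge> 0"
    and connected: "graph_connected ends w"
    and port: "port_matrix E"
    and gamma_pos: "\<gamma> > 0"
    and hinf: "hinf_norm (weighted_laplacian ends w) E \<le> ereal \<gamma>"
  shows "neg_semidef
           (- ((\<gamma> *\<^sub>R mat 1) ** weighted_laplacian ends w)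
            - transpose (weighted_laplacian ends w) ** (\<gamma> *\<^sub>R mat 1)
            + E ** transpose E
            + (1 / \<gamma>\<^sup>2) *\<^sub>R ((\<gamma> *\<^sub>R mat 1) ** E ** transpose E ** (\<gamma> *\<^sub>R mat 1)))"
proof -
  define L where "L = weighted_laplacian ends w"
  obtain M :: "real^'n^'m" where gram: "L = transpose M ** M"
    using weighted_laplacian_eq_gram[where ends = ends and w = w, OF w_nonneg]
    unfolding L_def by blast
  have sym: "transpose L = L"
    by (simp add: gram matrix_transpose_mul)
  have gain: "max_sv (transfer_matrix L E (\<i> * complex_of_real \<omega>)) \<le> \<gamma>" if "\<omega> > 0" for \<omega>
    using order_trans[OF max_sv_le_hinf_norm hinf[folded L_def]] that by simp
  have "norm (transpose E *v x) ^ 2 \<le> \<gamma> * (x \<bullet> (L *v x))" for x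
    using norm_output_squared_le_of_max_sv_le[OF gram less_imp_le[OF gamma_pos] gain] .
  then have "neg_semidef (E ** transpose E - \<gamma> *\<^sub>R L)"
    by (rule neg_semidef_outer_diff[OF sym])
  then show ?thesis
    unfolding L_def[symmetric] riccati_scalar_eq[OF sym gamma_pos[THEN less_imp_neq, symmetric]]
    by (intro neg_semidef_add)
qed

end
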